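(* Let $f$ be a $2\pi$-periodic continuous function with $f\in\mathrm{Lip}(\alpha)$, $0<\alpha\le1$, i.e. its modulus of continuity satisfies $\omega(\delta)=\mathcal{O}(\delta^{\alpha})$. Let $\{p_k\}_{k\ge0}$ be non-negative numbers with $P_n:=\sum_{k=0}^n p_k\ne0$ for all $n$, let $a_{n,k}=p_k/P_n$ for $0\le k\le n$ and $a_{n,k}=0$ otherwise, and suppose that for some $\beta\ge0$ \[ \sum_{k=0}^{m-1}(k+1)^{\beta}\left|\frac{a_{n,k}}{(k+1)^{\beta}}-\frac{a_{n,k+1}}{(k+2)^{\beta}}\right|=\mathcal{O}(a_{n,m}) \] for all $0\le m\le n$, $n=0,1,\dots$. Let $R_n(f;x):=\frac{1}{P_n}\sum_{k=0}^n p_kS_k(f;x)$. Then \[ \|R_n(f)-f\|=\begin{cases}\mathcal{O}\left(\left(\frac{p_n}{P_n}\right)^{\alpha}\right), & 0<\alpha<1,\\[4pt] \mathcal{O}\left(\frac{p_n}{P_n}\log\left(\frac{\pi P_n}{p_n}\right)\right), & \alpha=1.\end{cases} \]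
   Context: $S_k(f;x)$ is the $k$-th partial sum of the Fourier series of $f$ at $x$. $\|\cdot\|$ is the sup-norm. $\omega(\delta)=\sup_{|h|\le\delta}\sup_x|f(x+h)-f(x)|$. The notation $u=\mathcal{O}(v)$ means $u\le Cv$ for a positive constant $C$ (independent of $n$). *)

theory Defs
  imports "HOL-Analysis.Analysis"
begin

definition fourier_a :: "(real \<Rightarrow> real) \<Rightarrow> nat \<Rightarrow> real" where
  "fourier_a f j = (1 / pi) * integral {-pi..pi} (\<lambda>t. f t * cos (real j * t))"

definition fourier_b :: "(real \<Rightarrow> real) \<Rightarrow> nat \<Rightarrow> real" where
  "fourier_b f j = (1 / pi) * integral {-pi..pi} (\<lambda>t. f t * sin (real j * t))"

definition fourier_partial_sum :: "(real \<Rightarrow> real) \<Rightarrow> nat \<Rightarrow> real \<Rightarrow> real" where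
  "fourier_partial_sum f k x =
     fourier_a f 0 / 2 + (\<Sum>j=1..k. fourier_a f j * cos (real j * x) + fourier_b f j * sin (real j * x))"

definition modulus_of_continuity :: "(real \<Rightarrow> real) \<Rightarrow> real \<Rightarrow> real" where
  "modulus_of_continuity f \<delta> = (SUP h\<in>{h. \<bar>h\<bar> \<le> \<delta>}. SUP x. \<bar>f (x + h) - f x\<bar>)"

definition sup_norm :: "(real \<Rightarrow> real) \<Rightarrow> real" where
  "sup_norm g = (SUP x. \<bar>g x\<bar>)"

definition Psum :: "(nat \<Rightarrow> real) \<Rightarrow> nat \<Rightarrow> real" where
  "Psum p n = (\<Sum>k\<le>n. p k)"

definition amat :: "(nat \<Rightarrow> real) \<Rightarrow> nat \<Rightarrow> nat \<Rightarrow> real" where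
  "amat p n k = (if k \<le> n then p k / Psum p n else 0)"

definition R_mean :: "(nat \<Rightarrow> real) \<Rightarrow> (real \<Rightarrow> real) \<Rightarrow> nat \<Rightarrow> real \<Rightarrow> real" where
  "R_mean p f n x = (1 / Psum p n) * (\<Sum>k\<le>n. p k * fourier_partial_sum f k x)"

end

theory Submission
  imports Defs "HOL-Library.Periodic_Fun"
begin

(* With the kernel K_n = sum_k a_{n,k} D_k built from the Dirichlet kernels D_k,
   R_n(f;x) - f(x) = (1/pi) * integral_{-pi}^{pi} (f(x+u) - f(x)) K_n(u) du.
   The kernel satisfies |K_n(u)| <= 3/u, and, by Abel summation against the bounded partial
   sums of sin((j+1/2)u), also |K_n(u)| <= 18 V_n / u^2 with
   V_n = sum_k |a_{n,k} - a_{n,k+1}| + a_{n,n}.  The hypothesis on the weights gives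
   V_n = O(a_{n,n}).  Splitting the integral at eps = a_{n,n} = p_n/P_n and using
   |f(x+u) - f(x)| <= L |u|^alpha bounds the error by
   O(eps^alpha) + O(eps * integral_eps^pi u^(alpha-2) du), which is O(eps^alpha) for alpha < 1
   and O(eps log(pi/eps)) for alpha = 1. *)

lemma periodic_continuous_bounded:
  fixes f :: "real \<Rightarrow> real"
  assumes cont: "continuous_on UNIV f" and per: "\<And>x. f (x + 2 * pi) = f x"
  obtains M where "\<And>x. \<bar>f x\<bar> \<le> M"
proof -
  interpret periodic_fun_simple f "2 * pi" by standard (rule per)
  have "bounded (f ` {0..2*pi})"
    by (intro compact_imp_bounded compact_continuous_image continuous_on_subset[OF cont]) auto
  then obtain M where M: "\<forall>y\<in>{0..2*pi}. \<bar>f y\<bar> \<le> M"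
    unfolding bounded_iff by auto
  have "\<bar>f x\<bar> \<le> M" for x
  proof -
    define y where "y = x - of_int \<lfloor>x / (2*pi)\<rfloor> * (2*pi)"
    have "y \<in> {0..2*pi}"
      using floor_divide_lower[of "2*pi" x] floor_divide_upper[of "2*pi" x]
      by (auto simp: y_def algebra_simps)
    moreover have "f x = f y"
      unfolding y_def by (rule minus_of_int[symmetric])
    ultimately show ?thesis using M by simp
  qed
  then show thesis by (rule that)
qed

lemma integral_periodic_offset:
  fixes g :: "real \<Rightarrow> real"
  assumes cont: "continuous_on UNIV g" and per: "\<And>t. g (t + 2*pi) = g t"
  shows "integral {c..c+2*pi} g = integral {-pi..pi} g"
proof -
  define a where "a = min c (-pi) - 1"
  define b where "b = max c (-pi) + 2*pi + 1"
  define G where "G = (\<lambda>y. integral {a..y} g)"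
  have G_deriv: "(G has_real_derivative g y) (at y)" if "a < y" "y < b" for y
  proof -
    have "(G has_real_derivative g y) (at y within {a..b})"
      unfolding G_def using that
      by (intro integral_has_real_derivative continuous_on_subset[OF cont]) auto
    moreover have "at y within {a..b} = at y"
      using that by (intro at_within_interior) auto
    ultimately show ?thesis by simp
  qed
  have shifted_integral: "integral {y..y+2*pi} g = G (y + 2*pi) - G y" if "a \<le> y" for y
  proof -
    have "g integrable_on {a..y+2*pi}"
      by (intro integrable_continuous_real continuous_on_subset[OF cont]) auto
    then show ?thesis
      using Henstock_Kurzweil_Integration.integral_combine[of a y "y + 2*pi" g] that
      by (simp add: G_def)
  qed
  have "G (c + 2*pi) - G c = G (-pi + 2*pi) - G (-pi)"
  proof (rule DERIV_isconst3[where f = "\<lambda>y. G (y + 2*pi) - G y" and a = a and b = "b - 2*pi"])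
    fix y assume "y \<in> {a<..<b - 2*pi}"
    then have "a < y" "y < b" "a < y + 2*pi" "y + 2*pi < b"
      using pi_gt_zero unfolding greaterThanLessThan_iff by linarith+
    then have "((\<lambda>y. G (y + 2*pi) - G y) has_real_derivative g (y + 2*pi) * 1 - g y) (at y)"
      by (intro DERIV_diff DERIV_chain2[OF G_deriv] G_deriv derivative_eq_intros) auto
    then show "((\<lambda>y. G (y + 2*pi) - G y) has_real_derivative 0) (at y)"
      by (simp add: per)
  qed (use pi_gt_zero in \<open>auto simp: a_def b_def\<close>)
  then show ?thesis
    using shifted_integral[of c] shifted_integral[of "-pi"] by (simp add: a_def)
qed

lemma abs_diff_le_modulus_of_continuity:
  fixes f :: "real \<Rightarrow> real"
  assumes bounded: "\<And>x. \<bar>f x\<bar> \<le> M"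
  shows "\<bar>f (x + u) - f x\<bar> \<le> modulus_of_continuity f \<bar>u\<bar>"
proof -
  have diff_bounded: "\<bar>f (y + h) - f y\<bar> \<le> 2 * M" for y h
    using bounded[of "y + h"] bounded[of y] by linarith
  have "\<bar>f (x + u) - f x\<bar> \<le> (SUP y. \<bar>f (y + u) - f y\<bar>)"
    by (rule cSUP_upper) (auto intro!: bdd_aboveI[where M = "2*M"] simp: diff_bounded)
  also have "\<dots> \<le> modulus_of_continuity f \<bar>u\<bar>"
    unfolding modulus_of_continuity_def
    by (rule cSUP_upper[where f = "\<lambda>h. SUP y. \<bar>f (y + h) - f y\<bar>"])
       (auto intro!: bdd_aboveI[where M = "2*M"] cSUP_least simp: diff_bounded)
  finally show ?thesis .
qed

lemma abs_diff_le_powr_of_modulus_of_continuity: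
  fixes f :: "real \<Rightarrow> real"
  assumes "continuous_on UNIV f" and "\<And>x. f (x + 2 * pi) = f x"
    and modulus: "\<forall>\<delta>>0. modulus_of_continuity f \<delta> \<le> L * \<delta> powr \<alpha>"
  shows "\<bar>f (x + u) - f x\<bar> \<le> L * \<bar>u\<bar> powr \<alpha>"
proof (cases "u = 0")
  case False
  obtain M where M: "\<And>x. \<bar>f x\<bar> \<le> M"
    using periodic_continuous_bounded[OF assms(1,2)] by blast
  show ?thesis
    using order_trans[OF abs_diff_le_modulus_of_continuity[OF M] modulus[rule_format, of "\<bar>u\<bar>"]] False
    by simp
qed simp

definition dirichlet_kernel :: "nat \<Rightarrow> real \<Rightarrow> real" where
  "dirichlet_kernel k t = 1/2 + (\<Sum>j=1..k. cos (real j * t))"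

lemma dirichlet_kernel_minus [simp]: "dirichlet_kernel k (- t) = dirichlet_kernel k t"
  by (simp add: dirichlet_kernel_def)

lemma dirichlet_kernel_periodic: "dirichlet_kernel k (t + 2 * pi) = dirichlet_kernel k t"
proof -
  have "cos (real j * (t + 2 * pi)) = cos (real j * t)" for j
    using cos.plus_of_nat[of "real j * t" j] by (simp add: algebra_simps)
  then show ?thesis by (simp add: dirichlet_kernel_def)
qed

lemma continuous_on_dirichlet_kernel [continuous_intros]: "continuous_on S (dirichlet_kernel k)"
  unfolding dirichlet_kernel_def by (intro continuous_intros)

lemma has_integral_dirichlet_kernel: "(dirichlet_kernel k has_integral pi) {-pi..pi}"
proof -
  have "((\<lambda>t. cos (real j * t)) has_integral 0) {-pi..pi}" if "j \<in> {1..k}" for j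
    using has_integral_cos_nx[of "int j"] that by simp
  then have "((\<lambda>t. 1/2 + (\<Sum>j=1..k. cos (real j * t))) has_integral (pi + 0)) {-pi..pi}"
    using has_integral_const_real[of "1/2::real" "-pi" pi]
    by (intro has_integral_add has_integral_sum[where i = "\<lambda>_. 0", simplified]) auto
  then show ?thesis by (simp add: dirichlet_kernel_def[abs_def])
qed

lemma dirichlet_kernel_closed_form:
  "2 * sin (t/2) * dirichlet_kernel k t = sin ((real k + 1/2) * t)"
proof (induction k)
  case 0
  then show ?case by (simp add: dirichlet_kernel_def)
next
  case (Suc k)
  have next_arg: "(real (Suc k) + 1/2) * t = real (Suc k) * t + t/2"
    and prev_arg: "(real k + 1/2) * t = real (Suc k) * t - t/2"
    by (simp_all add: algebra_simps)
  have "2 * sin (t/2) * dirichlet_kernel (Suc k) t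
      = 2 * sin (t/2) * dirichlet_kernel k t + 2 * sin (t/2) * cos (real (Suc k) * t)"
    by (simp add: dirichlet_kernel_def algebra_simps)
  also have "\<dots> = sin ((real (Suc k) + 1/2) * t)"
    unfolding Suc.IH prev_arg next_arg sin_add sin_diff by (simp add: algebra_simps)
  finally show ?case .
qed

lemma sum_sin_half_odd_closed_form:
  "2 * sin (t/2) * (\<Sum>j\<le>k. sin ((real j + 1/2) * t)) = 1 - cos ((real k + 1) * t)"
proof (induction k)
  case 0
  show ?case using cos_double_sin[of "t/2"] by (simp add: power2_eq_square)
next
  case (Suc k)
  have next_arg: "(real (Suc k) + 1) * t = (real (Suc k) + 1/2) * t + t/2"
    and prev_arg: "(real k + 1) * t = (real (Suc k) + 1/2) * t - t/2"
    by (simp_all add: algebra_simps)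
  have "2 * sin (t/2) * (\<Sum>j\<le>Suc k. sin ((real j + 1/2) * t))
      = 2 * sin (t/2) * (\<Sum>j\<le>k. sin ((real j + 1/2) * t))
        + 2 * sin (t/2) * sin ((real (Suc k) + 1/2) * t)"
    by (simp add: algebra_simps)
  also have "\<dots> = 1 - cos ((real (Suc k) + 1) * t)"
    unfolding Suc.IH prev_arg next_arg cos_add cos_diff by (simp add: algebra_simps)
  finally show ?case .
qed

lemma sin_half_ge:
  assumes "0 \<le> t" "t \<le> pi"
  shows "t / 6 \<le> sin (t/2)"
proof -
  define s where "s = t/2"
  have s: "0 \<le> s" "s \<le> 2" using assms pi_less_4 by (simp_all add: s_def)
  have "\<bar>sin s - (\<Sum>m<3. sin_coeff m * s ^ m)\<bar> \<le> inverse (fact 3) * \<bar>s\<bar> ^ 3"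
    by (rule Maclaurin_sin_bound)
  moreover have "(\<Sum>m<3. sin_coeff m * s ^ m) = s"
    by (simp add: eval_nat_numeral sin_coeff_def)
  moreover have "inverse (fact 3) * \<bar>s\<bar> ^ 3 = s ^ 3 / 6"
    using s by (simp add: eval_nat_numeral field_simps)
  moreover have "s ^ 3 \<le> 4 * s"
    using s mult_mono[of s 2 s 2] mult_left_mono[of "s * s" 4 s] by (simp add: power3_eq_cube)
  ultimately show ?thesis
    unfolding s_def by linarith
qed

lemma abs_dirichlet_kernel_le:
  assumes "0 < t" "t \<le> pi"
  shows "\<bar>dirichlet_kernel k t\<bar> \<le> 3 / t"
proof -
  have sin_ge: "t / 6 \<le> sin (t/2)" using sin_half_ge assms by simp
  then have "2 * (t / 6) * \<bar>dirichlet_kernel k t\<bar> \<le> 2 * sin (t/2) * \<bar>dirichlet_kernel k t\<bar>"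
    by (intro mult_right_mono) auto
  also have "\<dots> = \<bar>2 * sin (t/2) * dirichlet_kernel k t\<bar>"
    using sin_ge assms by (simp add: abs_mult)
  also have "\<dots> = \<bar>sin ((real k + 1/2) * t)\<bar>"
    by (simp only: dirichlet_kernel_closed_form)
  also have "\<dots> \<le> 1" by simp
  finally show ?thesis using assms by (simp add: field_simps)
qed

lemma sum_by_parts_atMost:
  fixes a s :: "nat \<Rightarrow> real"
  shows "(\<Sum>k\<le>n. a k * s k)
       = (\<Sum>k<n. (a k - a (Suc k)) * (\<Sum>j\<le>k. s j)) + a n * (\<Sum>j\<le>n. s j)"
  by (induction n) (simp_all add: algebra_simps)

lemma abel_inequality:
  fixes a s :: "nat \<Rightarrow> real"
  assumes partial_sums: "\<And>k. k \<le> n \<Longrightarrow> \<bar>\<Sum>j\<le>k. s j\<bar> \<le> B"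
  shows "\<bar>\<Sum>k\<le>n. a k * s k\<bar> \<le> ((\<Sum>k<n. \<bar>a k - a (Suc k)\<bar>) + \<bar>a n\<bar>) * B"
proof -
  have "\<bar>\<Sum>k<n. (a k - a (Suc k)) * (\<Sum>j\<le>k. s j)\<bar> \<le> (\<Sum>k<n. \<bar>a k - a (Suc k)\<bar> * B)"
    by (rule order_trans[OF sum_abs sum_mono])
       (auto simp: abs_mult intro!: mult_left_mono partial_sums)
  moreover have "\<bar>a n * (\<Sum>j\<le>n. s j)\<bar> \<le> \<bar>a n\<bar> * B"
    by (auto simp: abs_mult intro!: mult_left_mono partial_sums)
  ultimately show ?thesis
    unfolding sum_by_parts_atMost[of a s n] distrib_right sum_distrib_right
    by (rule order_trans[OF abs_triangle_ineq add_mono])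
qed

definition mean_kernel :: "(nat \<Rightarrow> real) \<Rightarrow> nat \<Rightarrow> real \<Rightarrow> real" where
  "mean_kernel a n t = (\<Sum>k\<le>n. a k * dirichlet_kernel k t)"

lemma mean_kernel_minus [simp]: "mean_kernel a n (- t) = mean_kernel a n t"
  by (simp add: mean_kernel_def)

lemma continuous_on_mean_kernel [continuous_intros]: "continuous_on S (mean_kernel a n)"
  unfolding mean_kernel_def by (intro continuous_intros)

lemma abs_mean_kernel_le:
  assumes "0 < t" "t \<le> pi"
    and nonneg: "\<And>k. k \<le> n \<Longrightarrow> 0 \<le> a k" and sum_one: "(\<Sum>k\<le>n. a k) = 1"
  shows "\<bar>mean_kernel a n t\<bar> \<le> 3 / t"
proof -
  have "\<bar>a k * dirichlet_kernel k t\<bar> \<le> a k * (3 / t)" if "k \<le> n" for k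
    using mult_left_mono[OF abs_dirichlet_kernel_le[OF assms(1,2)] nonneg[OF that]] nonneg[OF that]
    by (simp add: abs_mult)
  then have "\<bar>mean_kernel a n t\<bar> \<le> (\<Sum>k\<le>n. a k * (3 / t))"
    unfolding mean_kernel_def by (intro order_trans[OF sum_abs] sum_mono) auto
  also have "\<dots> = 3 / t"
    by (simp only: sum_one flip: sum_distrib_right)
  finally show ?thesis .
qed

lemma abs_mean_kernel_le_variation:
  assumes t: "0 < t" "t \<le> pi"
  shows "\<bar>mean_kernel a n t\<bar> \<le> 18 * ((\<Sum>k<n. \<bar>a k - a (Suc k)\<bar>) + \<bar>a n\<bar>) / t^2"
proof -
  define V where "V = (\<Sum>k<n. \<bar>a k - a (Suc k)\<bar>) + \<bar>a n\<bar>"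
  have sin_ge: "t / 6 \<le> sin (t/2)" using sin_half_ge t by simp
  then have sin_pos: "0 < sin (t/2)" using t by linarith
  have partial_sums: "\<bar>\<Sum>j\<le>k. sin ((real j + 1/2) * t)\<bar> \<le> 1 / sin (t/2)" for k
  proof -
    have "sin (t/2) * \<bar>\<Sum>j\<le>k. sin ((real j + 1/2) * t)\<bar>
        = \<bar>2 * sin (t/2) * (\<Sum>j\<le>k. sin ((real j + 1/2) * t))\<bar> / 2"
      using sin_pos by (simp add: abs_mult)
    also have "\<dots> = \<bar>1 - cos ((real k + 1) * t)\<bar> / 2"
      by (simp only: sum_sin_half_odd_closed_form)
    also have "\<dots> \<le> 1"
      using abs_cos_le_one[of "(real k + 1) * t"] by (simp add: abs_le_iff)
    finally show ?thesis using sin_pos by (simp add: field_simps)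
  qed
  have "2 * sin (t/2) * mean_kernel a n t = (\<Sum>k\<le>n. a k * sin ((real k + 1/2) * t))"
    unfolding mean_kernel_def sum_distrib_left
    using dirichlet_kernel_closed_form by (simp add: algebra_simps)
  moreover have "2 * sin (t/2) * \<bar>mean_kernel a n t\<bar> = \<bar>2 * sin (t/2) * mean_kernel a n t\<bar>"
    using sin_pos by (simp add: abs_mult)
  ultimately have "2 * sin (t/2) * \<bar>mean_kernel a n t\<bar> = \<bar>\<Sum>k\<le>n. a k * sin ((real k + 1/2) * t)\<bar>"
    by simp
  also have "\<dots> \<le> V * (1 / sin (t/2))"
    unfolding V_def by (rule abel_inequality[OF partial_sums])
  finally have "\<bar>mean_kernel a n t\<bar> \<le> V / (2 * sin (t/2) * sin (t/2))"
    using sin_pos by (simp add: field_simps)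
  also have "\<dots> \<le> V / (2 * (t/6) * (t/6))"
    using sin_ge t by (intro divide_left_mono mult_mono) (auto simp: V_def intro!: add_nonneg_nonneg sum_nonneg)
  finally show ?thesis
    by (simp add: V_def power2_eq_square field_simps)
qed

lemma abs_le_tail_variation:
  fixes a :: "nat \<Rightarrow> real"
  assumes "k \<le> n"
  shows "\<bar>a k\<bar> \<le> (\<Sum>j<n. \<bar>a j - a (Suc j)\<bar>) + \<bar>a n\<bar>"
  using assms by (induction n rule: dec_induct) (auto simp: sum_nonneg)

lemma variation_le_of_weighted_variation:
  fixes a :: "nat \<Rightarrow> real" and \<beta> C :: real
  assumes nonneg: "\<And>k. k \<le> n \<Longrightarrow> 0 \<le> a k" and "0 \<le> \<beta>"
    and weighted: "(\<Sum>k<n. (real k + 1) powr \<beta> *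
                      \<bar>a k / (real k + 1) powr \<beta> - a (k + 1) / (real k + 2) powr \<beta>\<bar>) \<le> C * a n"
  shows "(\<Sum>k<n. \<bar>a k - a (Suc k)\<bar>) \<le> (2 * C + 1) * a n"
proof -
  define d where "d k = (real k + 1) powr \<beta> * (a k / (real k + 1) powr \<beta> - a (k + 1) / (real k + 2) powr \<beta>)" for k
  have diff_le: "a k - a (Suc k) \<le> d k" if "k < n" for k
  proof -
    have "(real k + 1) powr \<beta> \<le> (real k + 2) powr \<beta>"
      using \<open>0 \<le> \<beta>\<close> by (intro powr_mono2) auto
    then have "(real k + 1) powr \<beta> / (real k + 2) powr \<beta> * a (Suc k) \<le> a (Suc k)"
      using nonneg[of "Suc k"] that by (intro mult_left_le_one_le) auto
    then show ?thesis by (simp add: d_def right_diff_distrib)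
  qed
  \<comment> \<open>For \<open>x = a k - a (Suc k)\<close>: \<open>|x| = 2 max x 0 - x\<close> with \<open>max x 0 \<le> |d k|\<close>, and these \<open>x\<close> telescope.\<close>
  have "(\<Sum>k<n. \<bar>a k - a (Suc k)\<bar>) \<le> (\<Sum>k<n. 2 * \<bar>d k\<bar> - (a k - a (Suc k)))"
    using diff_le by (intro sum_mono) fastforce
  also have "\<dots> = 2 * (\<Sum>k<n. \<bar>d k\<bar>) - (a 0 - a n)"
    using sum_lessThan_telescope'[of a n] by (simp only: sum_subtractf sum_distrib_left)
  also have "(\<Sum>k<n. \<bar>d k\<bar>) \<le> C * a n"
    using weighted by (simp add: d_def abs_mult)
  finally show ?thesis using nonneg[of 0] by (simp add: algebra_simps)
qed

lemma has_integral_fourier_a: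
  assumes "continuous_on UNIV f"
  shows "((\<lambda>t. f t * cos (real j * t)) has_integral (pi * fourier_a f j)) {-pi..pi}"
proof -
  have "(\<lambda>t. f t * cos (real j * t)) integrable_on {-pi..pi}"
    by (intro integrable_continuous_real continuous_intros continuous_on_subset[OF assms]) auto
  then show ?thesis by (simp add: fourier_a_def has_integral_integral)
qed

lemma has_integral_fourier_b:
  assumes "continuous_on UNIV f"
  shows "((\<lambda>t. f t * sin (real j * t)) has_integral (pi * fourier_b f j)) {-pi..pi}"
proof -
  have "(\<lambda>t. f t * sin (real j * t)) integrable_on {-pi..pi}"
    by (intro integrable_continuous_real continuous_intros continuous_on_subset[OF assms]) auto
  then show ?thesis by (simp add: fourier_b_def has_integral_integral)
qed

lemma has_integral_fourier_partial_sum_convolution: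
  assumes cont: "continuous_on UNIV f"
  shows "((\<lambda>t. f t * dirichlet_kernel k (t - x)) has_integral (pi * fourier_partial_sum f k x)) {-pi..pi}"
proof -
  have expand: "f t * dirichlet_kernel k (t - x) = (1/2) * (f t * cos (real 0 * t)) +
      (\<Sum>j=1..k. cos (real j * x) * (f t * cos (real j * t)) + sin (real j * x) * (f t * sin (real j * t)))" for t
    by (simp add: dirichlet_kernel_def right_diff_distrib cos_diff distrib_left sum_distrib_left algebra_simps)
  have "((\<lambda>t. (1/2) * (f t * cos (real 0 * t)) +
      (\<Sum>j=1..k. cos (real j * x) * (f t * cos (real j * t)) + sin (real j * x) * (f t * sin (real j * t))))
      has_integral ((1/2) * (pi * fourier_a f 0) +
      (\<Sum>j=1..k. cos (real j * x) * (pi * fourier_a f j) + sin (real j * x) * (pi * fourier_b f j)))) {-pi..pi}"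
    by (intro has_integral_add has_integral_mult_right has_integral_sum finite_atLeastAtMost
        has_integral_fourier_a[OF cont] has_integral_fourier_b[OF cont])
  then show ?thesis
    unfolding expand by (simp add: fourier_partial_sum_def sum_distrib_left algebra_simps)
qed

lemma has_integral_fourier_partial_sum:
  assumes cont: "continuous_on UNIV f" and per: "\<And>x. f (x + 2 * pi) = f x"
  shows "((\<lambda>u. f (x + u) * dirichlet_kernel k u) has_integral (pi * fourier_partial_sum f k x)) {-pi..pi}"
proof -
  define h where "h u = f (x + u) * dirichlet_kernel k u" for u
  have h_cont: "continuous_on UNIV h"
    unfolding h_def by (intro continuous_intros continuous_on_compose2[OF cont]) auto
  have h_per: "h (u + 2 * pi) = h u" for u
    using per[of "x + u"] by (simp add: h_def dirichlet_kernel_periodic add.assoc)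
  have "h = (\<lambda>t. f t * dirichlet_kernel k (t - x)) \<circ> (+) x"
    by (auto simp: h_def)
  then have "(h has_integral (pi * fourier_partial_sum f k x)) {-pi-x..-pi-x+2*pi}"
    using has_integral_fourier_partial_sum_convolution[OF cont, of k x]
    by (simp add: has_integral_shift_Icc_real algebra_simps)
  moreover have "integral {-pi-x..-pi-x+2*pi} h = integral {-pi..pi} h"
    by (rule integral_periodic_offset[OF h_cont h_per])
  moreover have "h integrable_on {-pi..pi}"
    by (intro integrable_continuous_real continuous_on_subset[OF h_cont]) auto
  ultimately show ?thesis
    unfolding h_def[abs_def] by (metis has_integral_integrable_integral integral_unique)
qed

lemma has_integral_weighted_mean_error:
  assumes cont: "continuous_on UNIV f" and per: "\<And>x. f (x + 2 * pi) = f x"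
    and sum_one: "(\<Sum>k\<le>n. a k) = 1"
  shows "((\<lambda>u. (f (x + u) - f x) * mean_kernel a n u) has_integral
           (pi * ((\<Sum>k\<le>n. a k * fourier_partial_sum f k x) - f x))) {-pi..pi}"
proof -
  have weighted_const: "(\<Sum>k\<le>n. a k * (f x * pi)) = f x * pi"
    by (simp add: sum_one flip: sum_distrib_right)
  have "((\<lambda>u. (\<Sum>k\<le>n. a k * (f (x + u) * dirichlet_kernel k u)) - (\<Sum>k\<le>n. a k * (f x * dirichlet_kernel k u)))
      has_integral ((\<Sum>k\<le>n. a k * (pi * fourier_partial_sum f k x)) - (\<Sum>k\<le>n. a k * (f x * pi)))) {-pi..pi}"
    by (intro has_integral_diff has_integral_sum finite_atMost has_integral_mult_right
        has_integral_fourier_partial_sum[OF cont per] has_integral_dirichlet_kernel)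
  moreover have "(\<lambda>u. (\<Sum>k\<le>n. a k * (f (x + u) * dirichlet_kernel k u)) - (\<Sum>k\<le>n. a k * (f x * dirichlet_kernel k u)))
      = (\<lambda>u. (f (x + u) - f x) * mean_kernel a n u)"
    by (auto simp: mean_kernel_def sum_distrib_left algebra_simps simp flip: sum_subtractf intro!: sum.cong)
  moreover have "(\<Sum>k\<le>n. a k * (pi * fourier_partial_sum f k x)) - (\<Sum>k\<le>n. a k * (f x * pi))
      = pi * ((\<Sum>k\<le>n. a k * fourier_partial_sum f k x) - f x)"
    unfolding weighted_const by (simp add: sum_distrib_left algebra_simps)
  ultimately show ?thesis by simp
qed

lemma abs_integral_le_split:
  fixes h :: "real \<Rightarrow> real"
  assumes h_cont: "continuous_on {0..pi} h" and \<epsilon>: "0 < \<epsilon>" "\<epsilon> \<le> pi" and "0 < \<alpha>"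
    and near: "\<And>u. u \<in> {0..\<epsilon>} \<Longrightarrow> \<bar>h u\<bar> \<le> A * u powr (\<alpha> - 1)"
    and far: "\<And>u. u \<in> {\<epsilon>..pi} \<Longrightarrow> \<bar>h u\<bar> \<le> B * u powr (\<alpha> - 2)"
  shows "\<bar>integral {0..pi} h\<bar> \<le> A * (\<epsilon> powr \<alpha> / \<alpha>) + B * integral {\<epsilon>..pi} (\<lambda>u. u powr (\<alpha> - 2))"
proof -
  have integrable: "h integrable_on {a..b}" if "0 \<le> a" "b \<le> pi" for a b
    using that by (intro integrable_continuous_real continuous_on_subset[OF h_cont]) auto
  have near_majorant: "((\<lambda>u. A * u powr (\<alpha> - 1)) has_integral (A * (\<epsilon> powr \<alpha> / \<alpha>))) {0..\<epsilon>}"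
    using has_integral_mult_right[OF has_integral_powr_from_0[of "\<alpha> - 1" \<epsilon>], of A] \<open>0 < \<alpha>\<close> \<epsilon>
    by simp
  have far_majorant: "((\<lambda>u. B * u powr (\<alpha> - 2)) has_integral (B * integral {\<epsilon>..pi} (\<lambda>u. u powr (\<alpha> - 2)))) {\<epsilon>..pi}"
    using \<epsilon> by (intro has_integral_mult_right integrable_integral integrable_continuous_real continuous_intros) auto
  have "\<bar>integral {0..\<epsilon>} h\<bar> \<le> A * (\<epsilon> powr \<alpha> / \<alpha>)"
    using integral_norm_bound_integral[OF integrable has_integral_integrable[OF near_majorant]]
      integral_unique[OF near_majorant] near \<epsilon> by simp
  moreover have "\<bar>integral {\<epsilon>..pi} h\<bar> \<le> B * integral {\<epsilon>..pi} (\<lambda>u. u powr (\<alpha> - 2))"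
    using integral_norm_bound_integral[OF integrable has_integral_integrable[OF far_majorant]]
      integral_unique[OF far_majorant] far \<epsilon> by simp
  moreover have "integral {0..pi} h = integral {0..\<epsilon>} h + integral {\<epsilon>..pi} h"
    using \<epsilon> integrable[of 0 pi]
    by (simp add: Henstock_Kurzweil_Integration.integral_combine)
  ultimately show ?thesis by linarith
qed

lemma integral_powr_tail_le:
  assumes "\<alpha> < 1" "0 < \<epsilon>" "\<epsilon> \<le> pi"
  shows "integral {\<epsilon>..pi} (\<lambda>u. u powr (\<alpha> - 2)) \<le> \<epsilon> powr (\<alpha> - 1) / (1 - \<alpha>)"
proof -
  have "((\<lambda>u. u powr (\<alpha> - 2)) has_integral
      (- (pi powr (\<alpha> - 1) / (1 - \<alpha>)) - - (\<epsilon> powr (\<alpha> - 1) / (1 - \<alpha>)))) {\<epsilon>..pi}"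
  proof (rule fundamental_theorem_of_calculus[OF \<open>\<epsilon> \<le> pi\<close>])
    fix u assume "u \<in> {\<epsilon>..pi}"
    then have "0 < u" using assms by auto
    then have "((\<lambda>u. u powr (\<alpha> - 1)) has_real_derivative (\<alpha> - 1) * u powr (\<alpha> - 2)) (at u)"
      using has_real_derivative_powr[of u "\<alpha> - 1"] by simp
    then have "((\<lambda>u. - (u powr (\<alpha> - 1) / (1 - \<alpha>))) has_real_derivative
        - ((\<alpha> - 1) * u powr (\<alpha> - 2) / (1 - \<alpha>))) (at u)"
      by (intro DERIV_minus DERIV_cdivide)
    moreover have "- ((\<alpha> - 1) * u powr (\<alpha> - 2) / (1 - \<alpha>)) = u powr (\<alpha> - 2)"
      using \<open>\<alpha> < 1\<close> by (simp add: field_simps)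
    ultimately have "((\<lambda>u. - (u powr (\<alpha> - 1) / (1 - \<alpha>))) has_real_derivative u powr (\<alpha> - 2)) (at u)"
      by simp
    then show "((\<lambda>u. - (u powr (\<alpha> - 1) / (1 - \<alpha>))) has_vector_derivative u powr (\<alpha> - 2)) (at u within {\<epsilon>..pi})"
      by (simp add: has_real_derivative_iff_has_vector_derivative has_vector_derivative_at_within)
  qed
  then show ?thesis
    using assms by (simp add: integral_unique)
qed

lemma integral_inverse_tail:
  assumes "0 < \<epsilon>" "\<epsilon> \<le> pi"
  shows "integral {\<epsilon>..pi} (\<lambda>u. u powr (1 - 2)) = ln (pi / \<epsilon>)"
proof -
  have "((\<lambda>u. u powr (1 - 2)) has_integral (ln pi - ln \<epsilon>)) {\<epsilon>..pi}"
  proof (rule fundamental_theorem_of_calculus[OF \<open>\<epsilon> \<le> pi\<close>])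
    fix u assume "u \<in> {\<epsilon>..pi}"
    then have "0 < u" using assms by auto
    then have "(ln has_real_derivative u powr (1 - 2)) (at u)"
      by (auto intro!: derivative_eq_intros simp: powr_neg_one)
    then show "(ln has_vector_derivative u powr (1 - 2)) (at u within {\<epsilon>..pi})"
      by (simp add: has_real_derivative_iff_has_vector_derivative has_vector_derivative_at_within)
  qed
  then show ?thesis using assms by (simp add: integral_unique ln_div)
qed

definition holder_error_bound :: "real \<Rightarrow> real \<Rightarrow> real \<Rightarrow> real \<Rightarrow> real" where
  "holder_error_bound L c \<alpha> \<epsilon> =
     2 * (3 * L * (\<epsilon> powr \<alpha> / \<alpha>) + 18 * L * c * \<epsilon> * integral {\<epsilon>..pi} (\<lambda>u. u powr (\<alpha> - 2)))"

lemma holder_error_bound_le_powr: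
  assumes "0 < \<alpha>" "\<alpha> < 1" "0 < \<epsilon>" "\<epsilon> \<le> 1" "0 \<le> L" "0 \<le> c"
  shows "holder_error_bound L c \<alpha> \<epsilon> \<le> 2 * (3 * L / \<alpha> + 18 * L * c / (1 - \<alpha>)) * \<epsilon> powr \<alpha>"
proof -
  have "\<epsilon> * integral {\<epsilon>..pi} (\<lambda>u. u powr (\<alpha> - 2)) \<le> \<epsilon> * (\<epsilon> powr (\<alpha> - 1) / (1 - \<alpha>))"
    using integral_powr_tail_le[of \<alpha> \<epsilon>] assms pi_ge_two by (intro mult_left_mono) auto
  also have "\<dots> = \<epsilon> powr \<alpha> / (1 - \<alpha>)"
    using \<open>0 < \<epsilon>\<close> by (simp add: powr_diff)
  finally have tail: "\<epsilon> * integral {\<epsilon>..pi} (\<lambda>u. u powr (\<alpha> - 2)) \<le> \<epsilon> powr \<alpha> / (1 - \<alpha>)" .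
  have "holder_error_bound L c \<alpha> \<epsilon>
      = 2 * (3 * L * (\<epsilon> powr \<alpha> / \<alpha>) + 18 * L * c * (\<epsilon> * integral {\<epsilon>..pi} (\<lambda>u. u powr (\<alpha> - 2))))"
    by (simp add: holder_error_bound_def mult.assoc)
  also have "\<dots> \<le> 2 * (3 * L * (\<epsilon> powr \<alpha> / \<alpha>) + 18 * L * c * (\<epsilon> powr \<alpha> / (1 - \<alpha>)))"
    using tail assms by (intro mult_left_mono add_left_mono) auto
  also have "\<dots> = 2 * (3 * L / \<alpha> + 18 * L * c / (1 - \<alpha>)) * \<epsilon> powr \<alpha>"
    by (simp add: algebra_simps)
  finally show ?thesis .
qed

lemma holder_error_bound_le_log:
  assumes "0 < \<epsilon>" "\<epsilon> \<le> 1" "0 \<le> L" "0 \<le> c"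
  shows "holder_error_bound L c 1 \<epsilon> \<le> 2 * (3 * L / ln pi + 18 * L * c) * (\<epsilon> * ln (pi / \<epsilon>))"
proof -
  have "0 < ln pi" using pi_gt3 by simp
  moreover have "ln pi \<le> ln (pi / \<epsilon>)"
    using assms by (simp add: le_divide_eq)
  ultimately have near: "\<epsilon> \<le> \<epsilon> * ln (pi / \<epsilon>) / ln pi"
    using \<open>0 < \<epsilon>\<close> by (simp add: le_divide_eq)
  have "holder_error_bound L c 1 \<epsilon> = 2 * (3 * L * \<epsilon> + 18 * L * c * (\<epsilon> * ln (pi / \<epsilon>)))"
    using integral_inverse_tail[of \<epsilon>] assms pi_ge_two
    by (simp add: holder_error_bound_def mult.assoc)
  also have "\<dots> \<le> 2 * (3 * L * (\<epsilon> * ln (pi / \<epsilon>) / ln pi) + 18 * L * c * (\<epsilon> * ln (pi / \<epsilon>)))"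
    using near assms by (intro mult_left_mono add_right_mono) auto
  also have "\<dots> = 2 * (3 * L / ln pi + 18 * L * c) * (\<epsilon> * ln (pi / \<epsilon>))"
    by (simp add: algebra_simps)
  finally show ?thesis .
qed

lemma integral_symmetric_interval_fold:
  fixes H :: "real \<Rightarrow> real"
  assumes "continuous_on {-pi..pi} H"
  shows "integral {-pi..pi} H = integral {0..pi} (\<lambda>u. H u + H (- u))"
proof -
  have integrable: "H integrable_on {a..b}" if "-pi \<le> a" "b \<le> pi" for a b
    using that by (intro integrable_continuous_real continuous_on_subset[OF assms]) auto
  have reflected: "(\<lambda>u. H (- u)) integrable_on {0..pi}"
    by (intro integrable_continuous_real continuous_on_compose2[OF assms] continuous_intros) auto
  have "integral {-pi..pi} H = integral {-pi..0} H + integral {0..pi} H"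
    using integrable[of "-pi" pi]
    by (simp add: Henstock_Kurzweil_Integration.integral_combine)
  also have "integral {-pi..0} H = integral {0..pi} (\<lambda>u. H (- u))"
    using Henstock_Kurzweil_Integration.integral_reflect_real[of 0 "-pi" H] by simp
  finally show ?thesis
    using integral_add[OF integrable[of 0 pi] reflected] by simp
qed

lemma abs_weighted_fourier_mean_error_le:
  fixes f :: "real \<Rightarrow> real" and a :: "nat \<Rightarrow> real"
  assumes cont: "continuous_on UNIV f" and per: "\<And>x. f (x + 2 * pi) = f x"
    and holder: "\<And>x u. \<bar>f (x + u) - f x\<bar> \<le> L * \<bar>u\<bar> powr \<alpha>" and "0 < \<alpha>"
    and nonneg: "\<And>k. k \<le> n \<Longrightarrow> 0 \<le> a k" and sum_one: "(\<Sum>k\<le>n. a k) = 1"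
    and variation: "(\<Sum>k<n. \<bar>a k - a (Suc k)\<bar>) + \<bar>a n\<bar> \<le> c * \<epsilon>"
    and \<epsilon>: "0 < \<epsilon>" "\<epsilon> \<le> pi"
  shows "\<bar>(\<Sum>k\<le>n. a k * fourier_partial_sum f k x) - f x\<bar> \<le> holder_error_bound L c \<alpha> \<epsilon>"
proof -
  define H where "H u = (f (x + u) - f x) * mean_kernel a n u" for u
  have "0 \<le> L" using holder[of 0 1] by simp
  have H_cont: "continuous_on UNIV H"
    unfolding H_def by (intro continuous_intros continuous_on_compose2[OF cont]) auto
  have symmetrized: "\<bar>H u + H (- u)\<bar> \<le> 2 * (L * u powr \<alpha> * \<bar>mean_kernel a n u\<bar>)" if "0 \<le> u" for u
  proof -
    have bound: "\<bar>H v\<bar> \<le> L * u powr \<alpha> * \<bar>mean_kernel a n u\<bar>" if "v = u \<or> v = - u" for v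
      using mult_right_mono[OF holder[of x v] abs_ge_zero[of "mean_kernel a n u"]] that \<open>0 \<le> u\<close>
      by (auto simp: H_def abs_mult)
    then have "\<bar>H u\<bar> \<le> L * u powr \<alpha> * \<bar>mean_kernel a n u\<bar>"
      and "\<bar>H (- u)\<bar> \<le> L * u powr \<alpha> * \<bar>mean_kernel a n u\<bar>"
      by auto
    then show ?thesis
      using abs_triangle_ineq[of "H u" "H (- u)"] by linarith
  qed
  have split_bound: "\<bar>integral {0..pi} (\<lambda>u. H u + H (- u))\<bar>
      \<le> (2 * (3 * L)) * (\<epsilon> powr \<alpha> / \<alpha>) + (2 * (18 * L * c * \<epsilon>)) * integral {\<epsilon>..pi} (\<lambda>u. u powr (\<alpha> - 2))"
  proof (rule abs_integral_le_split[OF _ \<epsilon> \<open>0 < \<alpha>\<close>])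
    show "continuous_on {0..pi} (\<lambda>u. H u + H (- u))"
      by (intro continuous_intros continuous_on_compose2[OF H_cont]) auto
  next
    fix u assume u: "u \<in> {0..\<epsilon>}"
    show "\<bar>H u + H (- u)\<bar> \<le> 2 * (3 * L) * u powr (\<alpha> - 1)"
    proof (cases "u = 0")
      case False
      then have "\<bar>mean_kernel a n u\<bar> \<le> 3 / u"
        using u \<epsilon> by (intro abs_mean_kernel_le nonneg sum_one) auto
      then have "2 * (L * u powr \<alpha> * \<bar>mean_kernel a n u\<bar>) \<le> 2 * (L * u powr \<alpha> * (3 / u))"
        using \<open>0 \<le> L\<close> by (intro mult_left_mono) auto
      then show ?thesis
        using symmetrized[of u] u False by (simp add: powr_diff)
    qed (simp add: H_def)
  next
    fix u assume u: "u \<in> {\<epsilon>..pi}"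
    then have "0 \<le> u" using \<epsilon> by simp
    have "\<bar>mean_kernel a n u\<bar> \<le> 18 * ((\<Sum>k<n. \<bar>a k - a (Suc k)\<bar>) + \<bar>a n\<bar>) / u^2"
      using u \<epsilon> by (intro abs_mean_kernel_le_variation) auto
    also have "\<dots> \<le> 18 * (c * \<epsilon>) / u^2"
      using variation by (intro divide_right_mono mult_left_mono) auto
    finally have "2 * (L * u powr \<alpha> * \<bar>mean_kernel a n u\<bar>) \<le> 2 * (L * u powr \<alpha> * (18 * (c * \<epsilon>) / u^2))"
      using \<open>0 \<le> L\<close> by (intro mult_left_mono) auto
    also have "\<dots> = 2 * (18 * L * c * \<epsilon>) * u powr (\<alpha> - 2)"
      using u \<epsilon> by (simp add: powr_diff)
    finally show "\<bar>H u + H (- u)\<bar> \<le> 2 * (18 * L * c * \<epsilon>) * u powr (\<alpha> - 2)"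
      using symmetrized[OF \<open>0 \<le> u\<close>] by linarith
  qed
  have "pi * ((\<Sum>k\<le>n. a k * fourier_partial_sum f k x) - f x) = integral {-pi..pi} H"
    using has_integral_weighted_mean_error[OF cont per sum_one, of x]
    unfolding H_def[abs_def] by (rule integral_unique[symmetric])
  then have "pi * \<bar>(\<Sum>k\<le>n. a k * fourier_partial_sum f k x) - f x\<bar>
      = \<bar>integral {0..pi} (\<lambda>u. H u + H (- u))\<bar>"
    using integral_symmetric_interval_fold[OF continuous_on_subset[OF H_cont]]
    by (metis abs_mult abs_of_pos pi_gt_zero subset_UNIV)
  with split_bound have "pi * \<bar>(\<Sum>k\<le>n. a k * fourier_partial_sum f k x) - f x\<bar>
      \<le> holder_error_bound L c \<alpha> \<epsilon>"
    by (simp add: holder_error_bound_def algebra_simps)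
  moreover have "\<bar>(\<Sum>k\<le>n. a k * fourier_partial_sum f k x) - f x\<bar>
      \<le> pi * \<bar>(\<Sum>k\<le>n. a k * fourier_partial_sum f k x) - f x\<bar>"
    using pi_ge_two by (simp add: mult_le_cancel_right1)
  ultimately show ?thesis by linarith
qed

lemma riesz_mean_error_bound:
  fixes f :: "real \<Rightarrow> real" and p :: "nat \<Rightarrow> real"
  assumes cont: "continuous_on UNIV f" and per: "\<And>x. f (x + 2 * pi) = f x"
    and holder: "\<And>x u. \<bar>f (x + u) - f x\<bar> \<le> L * \<bar>u\<bar> powr \<alpha>" and "0 < \<alpha>"
    and p_nonneg: "\<And>k. 0 \<le> p k" and P_nz: "Psum p n \<noteq> 0" and "0 \<le> \<beta>"
    and weighted: "(\<Sum>k<n. (real k + 1) powr \<beta> *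
          \<bar>amat p n k / (real k + 1) powr \<beta> - amat p n (k + 1) / (real k + 2) powr \<beta>\<bar>)
       \<le> C * amat p n n"
  shows "0 < p n / Psum p n" and "p n / Psum p n \<le> 1"
    and "sup_norm (\<lambda>x. R_mean p f n x - f x) \<le> holder_error_bound L (2 * C + 2) \<alpha> (p n / Psum p n)"
proof -
  define a where "a = amat p n"
  define \<epsilon> where "\<epsilon> = p n / Psum p n"
  have "0 < Psum p n"
    using P_nz sum_nonneg[of "{..n}" p] p_nonneg by (force simp: Psum_def)
  have p_le_P: "p n \<le> Psum p n"
    unfolding Psum_def by (rule member_le_sum) (auto simp: p_nonneg)
  have nonneg: "0 \<le> a k" for k
    using p_nonneg[of k] \<open>0 < Psum p n\<close> by (simp add: a_def amat_def)
  have sum_one: "(\<Sum>k\<le>n. a k) = 1"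
    using \<open>0 < Psum p n\<close> by (simp add: a_def amat_def Psum_def flip: sum_divide_distrib)
  have a_n: "a n = \<epsilon>" by (simp add: a_def amat_def \<epsilon>_def)
  have variation: "(\<Sum>k<n. \<bar>a k - a (Suc k)\<bar>) \<le> (2 * C + 1) * a n"
    using variation_le_of_weighted_variation[OF nonneg \<open>0 \<le> \<beta>\<close>] weighted by (simp add: a_def)
  \<comment> \<open>\<open>p n > 0\<close> is not assumed: by the variation bound, \<open>a n = 0\<close> would make all weights vanish.\<close>
  have "a n \<noteq> 0"
  proof
    assume "a n = 0"
    then have "a k = 0" if "k \<le> n" for k
      using abs_le_tail_variation[OF that, of a] variation by simp
    then show False using sum_one by simp
  qed
  then show "0 < p n / Psum p n" using nonneg[of n] a_n by (simp add: \<epsilon>_def less_le)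
  show "p n / Psum p n \<le> 1" using p_le_P \<open>0 < Psum p n\<close> by simp
  have "(\<Sum>k<n. \<bar>a k - a (Suc k)\<bar>) + \<bar>a n\<bar> \<le> (2 * C + 2) * \<epsilon>"
    using variation nonneg[of n] a_n by (simp add: algebra_simps)
  then have "\<bar>(\<Sum>k\<le>n. a k * fourier_partial_sum f k x) - f x\<bar> \<le> holder_error_bound L (2 * C + 2) \<alpha> \<epsilon>" for x
    using abs_weighted_fourier_mean_error_le[OF cont per holder \<open>0 < \<alpha>\<close> nonneg sum_one]
      \<open>0 < p n / Psum p n\<close> \<open>p n / Psum p n \<le> 1\<close> pi_ge_two
    by (simp add: \<epsilon>_def)
  moreover have "R_mean p f n x = (\<Sum>k\<le>n. a k * fourier_partial_sum f k x)" for x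
    by (simp add: R_mean_def a_def amat_def sum_distrib_left)
  ultimately show "sup_norm (\<lambda>x. R_mean p f n x - f x) \<le> holder_error_bound L (2 * C + 2) \<alpha> (p n / Psum p n)"
    unfolding sup_norm_def \<epsilon>_def by (intro cSUP_least) auto
qed

theorem corollary4p3:
  fixes f :: "real \<Rightarrow> real" and p :: "nat \<Rightarrow> real" and \<alpha> \<beta> :: real
  assumes cont: "continuous_on UNIV f"
    and periodic: "\<And>x. f (x + 2 * pi) = f x"
    and alpha: "0 < \<alpha>" "\<alpha> \<le> 1"
    and lip: "\<exists>C>0. \<forall>\<delta>>0. modulus_of_continuity f \<delta> \<le> C * \<delta> powr \<alpha>"
    and p_nonneg: "\<And>k. p k \<ge> 0"
    and P_nz: "\<And>n. Psum p n \<noteq> 0"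
    and beta: "\<beta> \<ge> 0"
    and cond: "\<exists>C>0. \<forall>n m. m \<le> n \<longrightarrow>
       (\<Sum>k<m. (real k + 1) powr \<beta> *
          \<bar>amat p n k / (real k + 1) powr \<beta> - amat p n (k + 1) / (real k + 2) powr \<beta>\<bar>)
       \<le> C * amat p n m"
  shows "(\<alpha> < 1 \<longrightarrow> (\<exists>C>0. \<forall>n. sup_norm (\<lambda>x. R_mean p f n x - f x) \<le> C * (p n / Psum p n) powr \<alpha>))
       \<and> (\<alpha> = 1 \<longrightarrow> (\<exists>C>0. \<forall>n. sup_norm (\<lambda>x. R_mean p f n x - f x)
                                  \<le> C * ((p n / Psum p n) * ln (pi * Psum p n / p n))))"
proof -
  obtain L where L: "0 < L" "\<forall>\<delta>>0. modulus_of_continuity f \<delta> \<le> L * \<delta> powr \<alpha>"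
    using lip by blast
  obtain C where C: "0 < C" "\<forall>n m. m \<le> n \<longrightarrow>
       (\<Sum>k<m. (real k + 1) powr \<beta> *
          \<bar>amat p n k / (real k + 1) powr \<beta> - amat p n (k + 1) / (real k + 2) powr \<beta>\<bar>)
       \<le> C * amat p n m"
    using cond by blast
  note holder = abs_diff_le_powr_of_modulus_of_continuity[OF cont periodic L(2)]
  note riesz = riesz_mean_error_bound[OF cont periodic holder alpha(1) p_nonneg P_nz beta
      C(2)[rule_format, OF order_refl]]
  have "0 \<le> L" using L by simp
  show ?thesis
  proof (intro conjI impI)
    assume "\<alpha> < 1"
    then show "\<exists>K>0. \<forall>n. sup_norm (\<lambda>x. R_mean p f n x - f x) \<le> K * (p n / Psum p n) powr \<alpha>"
      using order_trans[OF riesz(3) holder_error_bound_le_powr[OF alpha(1) _ riesz(1,2) \<open>0 \<le> L\<close>]] L C alpha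
      by (intro exI[of _ "2 * (3 * L / \<alpha> + 18 * L * (2 * C + 2) / (1 - \<alpha>))"] conjI
            mult_pos_pos add_pos_pos divide_pos_pos) auto
  next
    assume "\<alpha> = 1"
    then show "\<exists>K>0. \<forall>n. sup_norm (\<lambda>x. R_mean p f n x - f x) \<le> K * ((p n / Psum p n) * ln (pi * Psum p n / p n))"
      using order_trans[OF riesz(3)[unfolded \<open>\<alpha> = 1\<close>] holder_error_bound_le_log[OF riesz(1,2) \<open>0 \<le> L\<close>]] L C pi_gt3
      by (intro exI[of _ "2 * (3 * L / ln pi + 18 * L * (2 * C + 2))"] conjI
            mult_pos_pos add_pos_pos divide_pos_pos ln_gt_zero) auto
  qed
qed

end
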